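(* Let $B$ be a finite dimensional C*-algebra of dimension $n\ge4$ with its canonical trace. Let $\mathcal C_B^+$ be the set of arrows of $\mathcal C_B$ which are linear combinations of composable compositions of tensor products of maps of the form $\eta$, $\mu^*$ and $id_1$. Then every arrow of $\mathcal C_B$ is a linear combination of compositions of the form $ab^*$ with $a,b$ arrows in $\mathcal C_B^+$.
   Context: The canonical trace $\tau$ of $B$ is the restriction to $B$ of the normalised trace of $\mathcal L(B)$ via the left regular representation. $B^{\otimes m}$ ($B^{\otimes0}=\mathbb C$) are Hilbert spaces via $\langle x,y\rangle=\tau(y^*x)$; $\mu$ is multiplication, $\eta:\mathbb C\to B$ is $1\mapsto1$, $id_m$ is the identity of $B^{\otimes m}$. $\mathcal C_B$ is the concrete monoidal W*-category with objects $k\in\mathbb N$ (Hilbert space $B^{\otimes k}$) whose morphisms $Hom_{\mathcal C_B}(k,l)\subset\mathcal L(B^{\otimes k},B^{\otimes l})$ are the linear combinations of composable compositions of tensor products of $\eta,\mu,\eta^*,\mu^*,id_m$. *)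

theory Defs
  imports "HOL-Analysis.Analysis"
begin

type_synonym 'N cmat = "complex^'N^'N"

definition cadj :: "('N::finite) cmat \<Rightarrow> 'N cmat" where
  "cadj A = (\<chi> i j. cnj (A $ j $ i))"

definition cscale :: "complex \<Rightarrow> ('N::finite) cmat \<Rightarrow> 'N cmat" where
  "cscale c A = (\<chi> i j. c * A $ i $ j)"

text \<open>B is a unital *-subalgebra of the matrix algebra M_N(C) (hence a finite
  dimensional C*-algebra; every finite dimensional C*-algebra is of this form).\<close>
definition fd_cstar_alg :: "('N::finite) cmat set \<Rightarrow> bool" where
  "fd_cstar_alg B \<longleftrightarrow> 0 \<in> B \<and> mat 1 \<in> B
     \<and> (\<forall>x\<in>B. \<forall>y\<in>B. x + y \<in> B \<and> x ** y \<in> B)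
     \<and> (\<forall>c. \<forall>x\<in>B. cscale c x \<in> B)
     \<and> (\<forall>x\<in>B. cadj x \<in> B)"

definition lincomb :: "('N::finite) cmat list \<Rightarrow> (nat \<Rightarrow> complex) \<Rightarrow> 'N cmat" where
  "lincomb e c = (\<Sum>i<length e. cscale (c i) (e ! i))"

text \<open>e is a (complex linear) basis of B; the dimension of B is length e.\<close>
definition is_basis :: "('N::finite) cmat set \<Rightarrow> 'N cmat list \<Rightarrow> bool" where
  "is_basis B e \<longleftrightarrow> set e \<subseteq> B
     \<and> (\<forall>c. lincomb e c = 0 \<longrightarrow> (\<forall>i<length e. c i = 0))
     \<and> (\<forall>b\<in>B. \<exists>c. lincomb e c = b)"

definition coord :: "('N::finite) cmat list \<Rightarrow> 'N cmat \<Rightarrow> nat \<Rightarrow> complex" where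
  "coord e b = (THE c. (\<forall>i. length e \<le> i \<longrightarrow> c i = 0) \<and> lincomb e c = b)"

text \<open>Canonical trace: normalised trace of the left multiplication operator L_b on B,
  computed in the basis e (the trace of an operator is basis independent).\<close>
definition can_trace :: "('N::finite) cmat list \<Rightarrow> 'N cmat \<Rightarrow> complex" where
  "can_trace e b = (\<Sum>i<length e. coord e (b ** (e ! i)) i) / of_nat (length e)"

definition onb :: "('N::finite) cmat set \<Rightarrow> 'N cmat list \<Rightarrow> bool" where
  "onb B e \<longleftrightarrow> is_basis B e \<and>
     (\<forall>i<length e. \<forall>j<length e.
        can_trace e (cadj (e ! j) ** (e ! i)) = (if i = j then 1 else 0))"

section \<open>Linear maps between tensor powers B^(tensor k), as matrices in the orthonormal
  basis e_{a_1} \<otimes> ... \<otimes> e_{a_k} (indexed by words a over {..<n})\<close>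

definition words :: "nat \<Rightarrow> nat \<Rightarrow> nat list set" where
  "words n k = {w. length w = k \<and> set w \<subseteq> {..<n}}"

text \<open>An arrow is (domain k, codomain l, kernel K) where K y x = <T e_x, e_y>.\<close>
type_synonym arrow = "nat \<times> nat \<times> (nat list \<Rightarrow> nat list \<Rightarrow> complex)"

definition adom :: "arrow \<Rightarrow> nat" where "adom f = fst f"
definition acod :: "arrow \<Rightarrow> nat" where "acod f = fst (snd f)"
definition aker :: "arrow \<Rightarrow> nat list \<Rightarrow> nat list \<Rightarrow> complex" where "aker f = snd (snd f)"

definition mk :: "nat \<Rightarrow> nat \<Rightarrow> nat \<Rightarrow> (nat list \<Rightarrow> nat list \<Rightarrow> complex) \<Rightarrow> arrow" where
  "mk n k l K = (k, l, \<lambda>y x. if y \<in> words n l \<and> x \<in> words n k then K y x else 0)"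

definition acomp :: "nat \<Rightarrow> arrow \<Rightarrow> arrow \<Rightarrow> arrow" where
  "acomp n g f = mk n (adom f) (acod g)
     (\<lambda>y x. \<Sum>z\<in>words n (acod f). aker g y z * aker f z x)"

definition atens :: "nat \<Rightarrow> arrow \<Rightarrow> arrow \<Rightarrow> arrow" where
  "atens n f g = mk n (adom f + adom g) (acod f + acod g)
     (\<lambda>y x. aker f (take (acod f) y) (take (adom f) x) * aker g (drop (acod f) y) (drop (adom f) x))"

definition astar :: "nat \<Rightarrow> arrow \<Rightarrow> arrow" where
  "astar n f = mk n (acod f) (adom f) (\<lambda>y x. cnj (aker f x y))"

definition aadd :: "nat \<Rightarrow> arrow \<Rightarrow> arrow \<Rightarrow> arrow" where
  "aadd n f g = mk n (adom f) (acod f) (\<lambda>y x. aker f y x + aker g y x)"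

definition ascale :: "nat \<Rightarrow> complex \<Rightarrow> arrow \<Rightarrow> arrow" where
  "ascale n c f = mk n (adom f) (acod f) (\<lambda>y x. c * aker f y x)"

definition azero :: "nat \<Rightarrow> nat \<Rightarrow> nat \<Rightarrow> arrow" where
  "azero n k l = mk n k l (\<lambda>_ _. 0)"

definition aid :: "nat \<Rightarrow> nat \<Rightarrow> arrow" where
  "aid n m = mk n m m (\<lambda>y x. if y = x then 1 else 0)"

text \<open>mu : B \<otimes> B \<rightarrow> B (multiplication) and eta : C \<rightarrow> B (1 \<mapsto> 1).\<close>
definition amu :: "('N::finite) cmat list \<Rightarrow> arrow" where
  "amu e = mk (length e) 2 1
     (\<lambda>y x. can_trace e (cadj (e ! (y ! 0)) ** ((e ! (x ! 0)) ** (e ! (x ! 1)))))"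

definition aeta :: "('N::finite) cmat list \<Rightarrow> arrow" where
  "aeta e = mk (length e) 0 1 (\<lambda>y x. can_trace e (cadj (e ! (y ! 0)) ** mat 1))"

inductive_set CB :: "('N::finite) cmat list \<Rightarrow> arrow set" for e where
  eta: "aeta e \<in> CB e"
| mu: "amu e \<in> CB e"
| eta_star: "astar (length e) (aeta e) \<in> CB e"
| mu_star: "astar (length e) (amu e) \<in> CB e"
| ident: "aid (length e) m \<in> CB e"
| comp: "f \<in> CB e \<Longrightarrow> g \<in> CB e \<Longrightarrow> adom g = acod f \<Longrightarrow> acomp (length e) g f \<in> CB e"
| tens: "f \<in> CB e \<Longrightarrow> g \<in> CB e \<Longrightarrow> atens (length e) f g \<in> CB e"
| zero: "azero (length e) k l \<in> CB e"
| add: "f \<in> CB e \<Longrightarrow> g \<in> CB e \<Longrightarrow> adom f = adom g \<Longrightarrow> acod f = acod g \<Longrightarrow> aadd (length e) f g \<in> CB e"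
| scale: "f \<in> CB e \<Longrightarrow> ascale (length e) c f \<in> CB e"

text \<open>C_B^+: linear combinations of composable compositions of tensor products of
  eta, mu* and id_1 (id_0 is the empty tensor product).\<close>
inductive_set CBplus :: "('N::finite) cmat list \<Rightarrow> arrow set" for e where
  eta: "aeta e \<in> CBplus e"
| mu_star: "astar (length e) (amu e) \<in> CBplus e"
| id0: "aid (length e) 0 \<in> CBplus e"
| id1: "aid (length e) 1 \<in> CBplus e"
| comp: "f \<in> CBplus e \<Longrightarrow> g \<in> CBplus e \<Longrightarrow> adom g = acod f \<Longrightarrow> acomp (length e) g f \<in> CBplus e"
| tens: "f \<in> CBplus e \<Longrightarrow> g \<in> CBplus e \<Longrightarrow> atens (length e) f g \<in> CBplus e"
| zero: "azero (length e) k l \<in> CBplus e"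
| add: "f \<in> CBplus e \<Longrightarrow> g \<in> CBplus e \<Longrightarrow> adom f = adom g \<Longrightarrow> acod f = acod g \<Longrightarrow> aadd (length e) f g \<in> CBplus e"
| scale: "f \<in> CBplus e \<Longrightarrow> ascale (length e) c f \<in> CBplus e"

definition lin_comb_ab :: "nat \<Rightarrow> nat \<Rightarrow> nat \<Rightarrow> (complex \<times> arrow \<times> arrow) list \<Rightarrow> arrow" where
  "lin_comb_ab n k l xs =
     foldr (\<lambda>(c, a, b) acc. aadd n (ascale n c (acomp n a (astar n b))) acc) xs (azero n k l)"

end

theory Submission
  imports Defs
begin

text \<open>
  Every arrow of \<open>C_B\<^sup>+\<close> is a linear combination of words in the elementary arrows
  \<open>id_p \<otimes> g \<otimes> id_q\<close> with \<open>g \<in> {\<eta>, \<mu>*}\<close>.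
  The heart of the matter is that for two such words \<open>u\<close>, \<open>v\<close> the arrow
  \<open>u* v\<close> is again a combination of products \<open>x y*\<close> of words.
  For two elementary arrows \<open>Q* R\<close> either the generators act on disjoint tensor factors
  and pass each other by the interchange law, or they overlap and one of the relations
  \<open>\<eta>*\<eta> = 1\<close>, \<open>\<mu>(\<eta> \<otimes> 1) = \<mu>(1 \<otimes> \<eta>) = 1\<close>,
  \<open>\<mu>\<mu>* = n 1\<close> and \<open>(\<mu> \<otimes> 1)(1 \<otimes> \<mu>*) = \<mu>*\<mu>\<close> applies;
  these follow from the orthonormality of the basis, the trace property of \<open>\<tau>\<close> and, for
  \<open>\<mu>\<mu>* = n 1\<close>, the definition of \<open>\<tau>\<close> as the normalised trace of left
  multiplication.
  Induction on the total length of \<open>u\<close> and \<open>v\<close> then moves every adjoint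
  to the right.
  Finally the generators of \<open>C_B\<close> are themselves of the form \<open>a b*\<close>, and the
  identities \<open>(a b*)(c d*) = a (b* c) d*\<close> and
  \<open>(a b*) \<otimes> (c d*) = (a \<otimes> c)(b \<otimes> d)*\<close> close such combinations under
  composition and tensor products.
\<close>

section \<open>Words and arrows\<close>

lemma words_finite [simp]: "finite (words n k)"
proof -
  have "words n k = {xs. set xs \<subseteq> {..<n} \<and> length xs = k}" unfolding words_def by auto
  thus ?thesis using finite_lists_length_eq[of "{..<n}" k] by simp
qed

lemma words_0 [simp]: "words n 0 = {[]}"
  unfolding words_def by auto

lemma length_words: "w \<in> words n k \<Longrightarrow> length w = k"
  unfolding words_def by simp

lemma Cons_in_words_Suc [simp]: "a # w \<in> words n (Suc k) \<longleftrightarrow> a < n \<and> w \<in> words n k"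
  unfolding words_def by auto

lemma words_SucE:
  assumes "w \<in> words n (Suc k)"
  obtains a v where "w = a # v" "a < n" "v \<in> words n k"
  using assms unfolding words_def by (auto simp: length_Suc_conv)

lemma take_in_words_add: "w \<in> words n (k + l) \<Longrightarrow> take k w \<in> words n k"
  unfolding words_def by (auto dest: in_set_takeD)

lemma drop_in_words_add: "w \<in> words n (k + l) \<Longrightarrow> drop k w \<in> words n l"
  unfolding words_def by (auto dest: in_set_dropD)

lemma sum_words_Suc: "(\<Sum>w\<in>words n (Suc k). F w) = (\<Sum>a<n. \<Sum>w\<in>words n k. F (a # w))"
proof -
  have words_Suc: "words n (Suc k) = (\<lambda>(a, w). a # w) ` ({..<n} \<times> words n k)"
    unfolding words_def by (auto simp: length_Suc_conv)
  have "inj_on (\<lambda>(a, w). a # w) ({..<n} \<times> words n k)"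
    by (auto simp: inj_on_def)
  hence "(\<Sum>w\<in>words n (Suc k). F w) = (\<Sum>(a, w)\<in>{..<n} \<times> words n k. F (a # w))"
    unfolding words_Suc by (subst sum.reindex) (auto simp: case_prod_beta intro: sum.cong)
  thus ?thesis by (simp add: sum.cartesian_product)
qed

lemma sum_words_add:
  "(\<Sum>w\<in>words n (k + l). F w) = (\<Sum>u\<in>words n k. \<Sum>v\<in>words n l. F (u @ v))"
proof -
  have words_add: "words n (k + l) = (\<lambda>(u, v). u @ v) ` (words n k \<times> words n l)"
  proof (intro equalityI subsetI)
    fix w assume "w \<in> words n (k + l)"
    thus "w \<in> (\<lambda>(u, v). u @ v) ` (words n k \<times> words n l)"
      by (intro image_eqI[of _ _ "(take k w, drop k w)"])
         (auto simp: take_in_words_add drop_in_words_add)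
  qed (auto simp: words_def)
  have "inj_on (\<lambda>(u, v). u @ v) (words n k \<times> words n l)"
    by (auto simp: inj_on_def words_def)
  hence "(\<Sum>w\<in>words n (k + l). F w) = (\<Sum>(u, v)\<in>words n k \<times> words n l. F (u @ v))"
    unfolding words_add by (subst sum.reindex) (auto simp: case_prod_beta intro: sum.cong)
  thus ?thesis by (simp add: sum.cartesian_product)
qed

text \<open>Only arrows vanishing off words of the right lengths, such as those built by
  \<^const>\<open>mk\<close>, are determined by their kernel on words.\<close>
definition wf_arrow :: "nat \<Rightarrow> arrow \<Rightarrow> bool" where
  "wf_arrow n f \<longleftrightarrow> (\<forall>y x. aker f y x \<noteq> 0 \<longrightarrow> y \<in> words n (acod f) \<and> x \<in> words n (adom f))"

lemma adom_mk [simp]: "adom (mk n k l K) = k"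
  and acod_mk [simp]: "acod (mk n k l K) = l"
  and aker_mk [simp]: "aker (mk n k l K) y x = (if y \<in> words n l \<and> x \<in> words n k then K y x else 0)"
  and wf_arrow_mk [simp]: "wf_arrow n (mk n k l K)"
  by (simp_all add: mk_def adom_def acod_def aker_def wf_arrow_def)

lemma arrow_eqI:
  assumes "wf_arrow n f" "wf_arrow n g" "adom f = adom g" "acod f = acod g"
    and "\<And>y x. y \<in> words n (acod f) \<Longrightarrow> x \<in> words n (adom f) \<Longrightarrow> aker f y x = aker g y x"
  shows "f = g"
proof -
  have "aker f = aker g"
    using assms unfolding wf_arrow_def by (metis ext)
  thus ?thesis
    using assms(3,4) by (simp add: adom_def acod_def aker_def prod_eq_iff)
qed

lemmas arrow_ops_defs = acomp_def atens_def astar_def aadd_def ascale_def azero_def aid_def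

lemma adom_ops [simp]:
  "adom (acomp n g f) = adom f" "adom (atens n f g) = adom f + adom g" "adom (astar n f) = acod f"
  "adom (aadd n f g) = adom f" "adom (ascale n c f) = adom f" "adom (azero n k l) = k"
  "adom (aid n m) = m"
  by (simp_all add: arrow_ops_defs)

lemma acod_ops [simp]:
  "acod (acomp n g f) = acod g" "acod (atens n f g) = acod f + acod g" "acod (astar n f) = adom f"
  "acod (aadd n f g) = acod f" "acod (ascale n c f) = acod f" "acod (azero n k l) = l"
  "acod (aid n m) = m"
  by (simp_all add: arrow_ops_defs)

lemma wf_arrow_ops [simp]:
  "wf_arrow n (acomp n g f)" "wf_arrow n (atens n f g)" "wf_arrow n (astar n f)"
  "wf_arrow n (aadd n f g)" "wf_arrow n (ascale n c f)" "wf_arrow n (azero n k l)"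
  "wf_arrow n (aid n m)"
  by (simp_all add: arrow_ops_defs)

lemma aker_ops:
  "aker (acomp n g f) y x = (if y \<in> words n (acod g) \<and> x \<in> words n (adom f) then
      (\<Sum>z\<in>words n (acod f). aker g y z * aker f z x) else 0)"
  "aker (atens n f g) y x = (if y \<in> words n (acod f + acod g) \<and> x \<in> words n (adom f + adom g) then
      aker f (take (acod f) y) (take (adom f) x) * aker g (drop (acod f) y) (drop (adom f) x) else 0)"
  "aker (astar n f) y x = (if y \<in> words n (adom f) \<and> x \<in> words n (acod f) then cnj (aker f x y) else 0)"
  "aker (aadd n f g) y x = (if y \<in> words n (acod f) \<and> x \<in> words n (adom f) then aker f y x + aker g y x else 0)"
  "aker (ascale n c f) y x = (if y \<in> words n (acod f) \<and> x \<in> words n (adom f) then c * aker f y x else 0)"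
  "aker (azero n k l) y x = 0"
  "aker (aid n m) y x = (if y \<in> words n m \<and> x \<in> words n m \<and> y = x then 1 else 0)"
  by (simp_all add: arrow_ops_defs)

lemma acomp_assoc:
  assumes "adom g = acod f"
  shows "acomp n h (acomp n g f) = acomp n (acomp n h g) f"
proof (rule arrow_eqI[of n])
  fix y x assume y: "y \<in> words n (acod (acomp n h (acomp n g f)))"
    and x: "x \<in> words n (adom (acomp n h (acomp n g f)))"
  have "aker (acomp n h (acomp n g f)) y x
     = (\<Sum>z\<in>words n (acod g). \<Sum>w\<in>words n (acod f). aker h y z * (aker g z w * aker f w x))"
    using y x by (simp add: aker_ops sum_distrib_left)
  also have "\<dots> = (\<Sum>w\<in>words n (acod f). \<Sum>z\<in>words n (acod g). aker h y z * aker g z w * aker f w x)"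
    by (subst sum.swap) (simp add: mult.assoc)
  also have "\<dots> = aker (acomp n (acomp n h g) f) y x"
    using y x assms by (simp add: aker_ops sum_distrib_right)
  finally show "aker (acomp n h (acomp n g f)) y x = aker (acomp n (acomp n h g) f) y x" .
qed simp_all

lemma acomp_id_left:
  assumes "wf_arrow n f" "acod f = m"
  shows "acomp n (aid n m) f = f"
proof (rule arrow_eqI[of n])
  fix y x assume "y \<in> words n (acod (acomp n (aid n m) f))" "x \<in> words n (adom (acomp n (aid n m) f))"
  thus "aker (acomp n (aid n m) f) y x = aker f y x"
    using assms by (simp add: aker_ops if_distrib if_distribR cong: if_cong)
qed (use assms in simp_all)

lemma acomp_id_right:
  assumes "wf_arrow n f" "adom f = m"
  shows "acomp n f (aid n m) = f"
proof (rule arrow_eqI[of n])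
  fix y x assume "y \<in> words n (acod (acomp n f (aid n m)))" "x \<in> words n (adom (acomp n f (aid n m)))"
  thus "aker (acomp n f (aid n m)) y x = aker f y x"
    using assms by (simp add: aker_ops if_distrib if_distribR cong: if_cong)
qed (use assms in simp_all)

lemma atens_assoc: "atens n (atens n f g) h = atens n f (atens n g h)"
proof (rule arrow_eqI[of n])
  fix y x assume y: "y \<in> words n (acod (atens n (atens n f g) h))"
    and x: "x \<in> words n (adom (atens n (atens n f g) h))"
  have "y \<in> words n (acod f + (acod g + acod h))" "x \<in> words n (adom f + (adom g + adom h))"
    using y x by (simp_all add: add.assoc)
  with y x show "aker (atens n (atens n f g) h) y x = aker (atens n f (atens n g h)) y x"
    by (simp add: aker_ops take_in_words_add drop_in_words_add min_def drop_take add.commute)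
qed (simp_all add: add.assoc)

lemma atens_id0_left: "wf_arrow n f \<Longrightarrow> atens n (aid n 0) f = f"
  by (rule arrow_eqI[of n]) (simp_all add: aker_ops)

lemma atens_id0_right: "wf_arrow n f \<Longrightarrow> atens n f (aid n 0) = f"
  by (rule arrow_eqI[of n]) (simp_all add: aker_ops length_words)

lemma atens_aid: "atens n (aid n p) (aid n q) = aid n (p + q)"
proof (rule arrow_eqI[of n])
  fix y x assume "y \<in> words n (acod (atens n (aid n p) (aid n q)))"
    "x \<in> words n (adom (atens n (aid n p) (aid n q)))"
  moreover have "(take p y = take p x \<and> drop p y = drop p x) \<longleftrightarrow> y = x"
    by (metis append_take_drop_id)
  ultimately show "aker (atens n (aid n p) (aid n q)) y x = aker (aid n (p + q)) y x"
    by (auto simp: aker_ops take_in_words_add drop_in_words_add)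
qed simp_all

lemma interchange:
  assumes "adom f = acod h" "adom g = acod k"
  shows "acomp n (atens n f g) (atens n h k) = atens n (acomp n f h) (acomp n g k)"
proof (rule arrow_eqI[of n])
  fix y x assume y: "y \<in> words n (acod (acomp n (atens n f g) (atens n h k)))"
    and x: "x \<in> words n (adom (acomp n (atens n f g) (atens n h k)))"
  have "aker (acomp n (atens n f g) (atens n h k)) y x
      = (\<Sum>u\<in>words n (acod h). \<Sum>v\<in>words n (acod k).
          (aker f (take (acod f) y) u * aker g (drop (acod f) y) v) *
          (aker h u (take (adom h) x) * aker k v (drop (adom h) x)))"
    using y x assms by (simp add: aker_ops sum_words_add length_words cong: sum.cong)
  also have "\<dots> = (\<Sum>u\<in>words n (acod h). aker f (take (acod f) y) u * aker h u (take (adom h) x)) *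
                  (\<Sum>v\<in>words n (acod k). aker g (drop (acod f) y) v * aker k v (drop (adom h) x))"
    by (simp add: sum_product mult_ac)
  also have "\<dots> = aker (atens n (acomp n f h) (acomp n g k)) y x"
    using y x assms by (simp add: aker_ops take_in_words_add drop_in_words_add)
  finally show "aker (acomp n (atens n f g) (atens n h k)) y x
      = aker (atens n (acomp n f h) (acomp n g k)) y x" .
qed simp_all

lemma astar_astar: "wf_arrow n f \<Longrightarrow> astar n (astar n f) = f"
  by (rule arrow_eqI[of n]) (simp_all add: aker_ops)

lemma astar_acomp: "adom g = acod f \<Longrightarrow> astar n (acomp n g f) = acomp n (astar n f) (astar n g)"
  by (rule arrow_eqI[of n]) (simp_all add: aker_ops mult.commute)

lemma astar_atens: "astar n (atens n f g) = atens n (astar n f) (astar n g)"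
  by (rule arrow_eqI[of n]) (auto simp: aker_ops take_in_words_add drop_in_words_add)

lemma astar_aid: "astar n (aid n m) = aid n m"
  by (rule arrow_eqI[of n]) (auto simp: aker_ops)

lemma astar_aadd:
  "adom f = adom g \<Longrightarrow> acod f = acod g \<Longrightarrow> astar n (aadd n f g) = aadd n (astar n f) (astar n g)"
  by (rule arrow_eqI[of n]) (auto simp: aker_ops)

lemma astar_ascale: "astar n (ascale n c f) = ascale n (cnj c) (astar n f)"
  by (rule arrow_eqI[of n]) (auto simp: aker_ops)

lemma astar_azero: "astar n (azero n k l) = azero n l k"
  by (rule arrow_eqI[of n]) (auto simp: aker_ops)

lemma acomp_aadd_left:
  assumes "adom g1 = acod f" "adom g2 = acod f" "acod g1 = acod g2"
  shows "acomp n (aadd n g1 g2) f = aadd n (acomp n g1 f) (acomp n g2 f)"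
  by (rule arrow_eqI[of n])
     (use assms in \<open>auto simp: aker_ops sum.distrib distrib_right intro!: sum.cong\<close>)

lemma acomp_aadd_right:
  assumes "adom g = acod f1" "adom f1 = adom f2" "acod f1 = acod f2"
  shows "acomp n g (aadd n f1 f2) = aadd n (acomp n g f1) (acomp n g f2)"
  by (rule arrow_eqI[of n])
     (use assms in \<open>auto simp: aker_ops sum.distrib distrib_left intro!: sum.cong\<close>)

lemma acomp_ascale_left: "adom g = acod f \<Longrightarrow> acomp n (ascale n c g) f = ascale n c (acomp n g f)"
  by (rule arrow_eqI[of n]) (auto simp: aker_ops sum_distrib_left mult.assoc intro!: sum.cong)

lemma acomp_ascale_right: "adom g = acod f \<Longrightarrow> acomp n g (ascale n c f) = ascale n c (acomp n g f)"
  by (rule arrow_eqI[of n]) (auto simp: aker_ops sum_distrib_left mult_ac intro!: sum.cong)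

lemma acomp_azero_left: "acomp n (azero n k l) f = azero n (adom f) l"
  and acomp_azero_right: "acomp n g (azero n k l) = azero n k (acod g)"
  by (rule arrow_eqI[of n]; simp add: aker_ops)+

lemma atens_aadd_left:
  "adom f1 = adom f2 \<Longrightarrow> acod f1 = acod f2 \<Longrightarrow>
    atens n (aadd n f1 f2) g = aadd n (atens n f1 g) (atens n f2 g)"
  by (rule arrow_eqI[of n]) (auto simp: aker_ops take_in_words_add drop_in_words_add distrib_right)

lemma atens_aadd_right:
  "adom g1 = adom g2 \<Longrightarrow> acod g1 = acod g2 \<Longrightarrow>
    atens n f (aadd n g1 g2) = aadd n (atens n f g1) (atens n f g2)"
  by (rule arrow_eqI[of n]) (auto simp: aker_ops take_in_words_add drop_in_words_add distrib_left)

lemma atens_ascale_left: "atens n (ascale n c f) g = ascale n c (atens n f g)"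
  and atens_ascale_right: "atens n f (ascale n c g) = ascale n c (atens n f g)"
  by (rule arrow_eqI[of n]; auto simp: aker_ops take_in_words_add drop_in_words_add)+

lemma atens_azero_left: "atens n (azero n k l) g = azero n (k + adom g) (l + acod g)"
  and atens_azero_right: "atens n f (azero n k l) = azero n (adom f + k) (acod f + l)"
  by (rule arrow_eqI[of n]; simp add: aker_ops)+

lemma aadd_azero_left: "wf_arrow n g \<Longrightarrow> adom g = k \<Longrightarrow> acod g = l \<Longrightarrow> aadd n (azero n k l) g = g"
  by (rule arrow_eqI[of n]) (auto simp: aker_ops)

lemma aadd_assoc:
  "adom f = adom g \<Longrightarrow> acod f = acod g \<Longrightarrow> adom g = adom h \<Longrightarrow> acod g = acod h \<Longrightarrow>
    aadd n f (aadd n g h) = aadd n (aadd n f g) h"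
  by (rule arrow_eqI[of n]) (auto simp: aker_ops)

lemma ascale_aadd:
  "adom f = adom g \<Longrightarrow> acod f = acod g \<Longrightarrow> ascale n c (aadd n f g) = aadd n (ascale n c f) (ascale n c g)"
  by (rule arrow_eqI[of n]) (auto simp: aker_ops distrib_left)

lemma ascale_ascale: "ascale n c (ascale n d f) = ascale n (c * d) f"
  by (rule arrow_eqI[of n]) (auto simp: aker_ops)

lemma ascale_azero: "ascale n c (azero n k l) = azero n k l"
  by (rule arrow_eqI[of n]) (auto simp: aker_ops)

definition whisker :: "nat \<Rightarrow> nat \<Rightarrow> arrow \<Rightarrow> nat \<Rightarrow> arrow" where
  "whisker n p g q = atens n (aid n p) (atens n g (aid n q))"

lemma whisker_typed [simp]:
  "adom (whisker n p g q) = p + adom g + q" "acod (whisker n p g q) = p + acod g + q"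
  "wf_arrow n (whisker n p g q)"
  by (simp_all add: whisker_def)

lemma whisker_0_0: "wf_arrow n g \<Longrightarrow> whisker n 0 g 0 = g"
  by (simp add: whisker_def atens_id0_left atens_id0_right)

lemma acomp_whisker: "adom g = acod h \<Longrightarrow> acomp n (whisker n p g q) (whisker n p h q) = whisker n p (acomp n g h) q"
  unfolding whisker_def by (simp add: interchange acomp_id_left)

lemma astar_whisker: "astar n (whisker n p g q) = whisker n p (astar n g) q"
  unfolding whisker_def by (simp add: astar_atens astar_aid)

lemma whisker_aid: "whisker n p (aid n m) q = aid n (p + m + q)"
  unfolding whisker_def by (simp add: atens_aid add.assoc)

lemma whisker_ascale: "whisker n p (ascale n c g) q = ascale n c (whisker n p g q)"
  unfolding whisker_def by (simp add: atens_ascale_left atens_ascale_right)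

lemma whisker_atens_aid_right: "whisker n p (atens n g (aid n 1)) q = whisker n p g (Suc q)"
  unfolding whisker_def by (simp add: atens_assoc atens_aid)

lemma whisker_atens_aid_left: "whisker n p (atens n (aid n 1) g) q = whisker n (Suc p) g q"
  unfolding whisker_def by (simp add: atens_assoc[symmetric] atens_aid)

lemma atens_whisker_aid: "atens n (whisker n p g q) (aid n r) = whisker n p g (q + r)"
  unfolding whisker_def by (simp add: atens_assoc atens_aid)

lemma atens_aid_whisker: "atens n (aid n r) (whisker n p g q) = whisker n (r + p) g q"
  unfolding whisker_def by (simp add: atens_assoc[symmetric] atens_aid)

lemma adj_whisker_disjoint:
  assumes "wf_arrow n g" "wf_arrow n h"
  shows "acomp n (astar n (whisker n p g (m + acod h + q))) (whisker n (p + acod g + m) h q)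
       = acomp n (whisker n (p + adom g + m) h q) (astar n (whisker n p g (m + adom h + q)))"
proof -
  define H where "H = whisker n m h q"
  have "whisker n (p + r + m) h q = atens n (aid n p) (atens n (aid n r) H)" for r
    unfolding H_def by (simp add: atens_aid_whisker add.assoc)
  moreover have "astar n (whisker n p g (m + k + q)) = atens n (aid n p) (atens n (astar n g) (aid n (m + k + q)))"
    for k
    by (simp add: whisker_def astar_atens astar_aid)
  moreover have "adom H = m + adom h + q" "acod H = m + acod h + q" "wf_arrow n H"
    by (simp_all add: H_def)
  ultimately show ?thesis
    using assms by (simp add: interchange acomp_id_left acomp_id_right)
qed

section \<open>Linear spans of arrows\<close>

inductive_set lspan :: "nat \<Rightarrow> arrow set \<Rightarrow> nat \<Rightarrow> nat \<Rightarrow> arrow set" for n A k l where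
  base: "a \<in> A \<Longrightarrow> adom a = k \<Longrightarrow> acod a = l \<Longrightarrow> wf_arrow n a \<Longrightarrow> a \<in> lspan n A k l"
| zero: "azero n k l \<in> lspan n A k l"
| add: "f \<in> lspan n A k l \<Longrightarrow> g \<in> lspan n A k l \<Longrightarrow> aadd n f g \<in> lspan n A k l"
| scale: "f \<in> lspan n A k l \<Longrightarrow> ascale n c f \<in> lspan n A k l"

lemma lspan_typed: "f \<in> lspan n A k l \<Longrightarrow> adom f = k \<and> acod f = l \<and> wf_arrow n f"
  by (induct rule: lspan.induct) auto

lemma lspan_map:
  assumes "f \<in> lspan n A k l"
    and "\<And>a. a \<in> A \<Longrightarrow> adom a = k \<Longrightarrow> acod a = l \<Longrightarrow> wf_arrow n a \<Longrightarrow> \<phi> a \<in> lspan n A' k' l'"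
    and "\<phi> (azero n k l) \<in> lspan n A' k' l'"
    and "\<And>f g. adom f = k \<Longrightarrow> acod f = l \<Longrightarrow> wf_arrow n f \<Longrightarrow> adom g = k \<Longrightarrow> acod g = l \<Longrightarrow>
          wf_arrow n g \<Longrightarrow> \<phi> (aadd n f g) = aadd n (\<phi> f) (\<phi> g)"
    and "\<And>c f. adom f = k \<Longrightarrow> acod f = l \<Longrightarrow> wf_arrow n f \<Longrightarrow> \<phi> (ascale n c f) = ascale n c (\<phi> f)"
  shows "\<phi> f \<in> lspan n A' k' l'"
  using assms(1)
proof induct
  case (add f g)
  thus ?case using assms(4) lspan_typed[OF add(1)] lspan_typed[OF add(3)] by (simp add: lspan.add)
next
  case (scale f c)
  thus ?case using assms(5) lspan_typed[OF scale(1)] by (simp add: lspan.scale)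
qed (use assms(2,3) in auto)

lemma lspan_trans:
  assumes "f \<in> lspan n A k l"
    and "\<And>a. a \<in> A \<Longrightarrow> adom a = k \<Longrightarrow> acod a = l \<Longrightarrow> wf_arrow n a \<Longrightarrow> a \<in> lspan n A' k l"
  shows "f \<in> lspan n A' k l"
  by (rule lspan_map[OF assms(1), where \<phi> = "\<lambda>z. z"]) (use assms(2) in \<open>auto intro: lspan.zero\<close>)

lemma lspan_astar: "f \<in> lspan n A k l \<Longrightarrow> astar n f \<in> lspan n (astar n ` A) l k"
proof (induct rule: lspan.induct)
  case (add f g)
  thus ?case using lspan_typed[OF add(1)] lspan_typed[OF add(3)] by (simp add: astar_aadd lspan.add)
qed (auto intro: lspan.intros simp: astar_azero astar_ascale)

lemma lspan_acomp:
  assumes f: "f \<in> lspan n A k l" and "adom L = l" "acod R = k"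
    and "\<And>a. a \<in> A \<Longrightarrow> adom a = k \<Longrightarrow> acod a = l \<Longrightarrow> wf_arrow n a \<Longrightarrow>
          acomp n (acomp n L a) R \<in> lspan n A' (adom R) (acod L)"
  shows "acomp n (acomp n L f) R \<in> lspan n A' (adom R) (acod L)"
  by (rule lspan_map[OF f])
     (use assms(2-4) in \<open>auto simp: acomp_azero_left acomp_azero_right acomp_aadd_left acomp_aadd_right
        acomp_ascale_left acomp_ascale_right intro: lspan.zero\<close>)

lemma lspan_acomp_left:
  assumes f: "f \<in> lspan n A k l" and L: "adom L = l"
    and "\<And>a. a \<in> A \<Longrightarrow> adom a = k \<Longrightarrow> acod a = l \<Longrightarrow> wf_arrow n a \<Longrightarrow> acomp n L a \<in> lspan n A' k (acod L)"
  shows "acomp n L f \<in> lspan n A' k (acod L)"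
  using lspan_acomp[OF f L, of "aid n k" A'] assms(3) lspan_typed[OF f] by (simp add: acomp_id_right)

lemma lspan_acomp_right:
  assumes f: "f \<in> lspan n A k l" and R: "acod R = k"
    and "\<And>a. a \<in> A \<Longrightarrow> adom a = k \<Longrightarrow> acod a = l \<Longrightarrow> wf_arrow n a \<Longrightarrow> acomp n a R \<in> lspan n A' (adom R) l"
  shows "acomp n f R \<in> lspan n A' (adom R) l"
  using lspan_acomp[OF f _ R, of "aid n l" A'] assms(3) lspan_typed[OF f] by (simp add: acomp_id_left)

lemma lspan_acomp_lspan:
  assumes "f \<in> lspan n A k l" "g \<in> lspan n A' l m"
    and "\<And>a a'. a \<in> A \<Longrightarrow> adom a = k \<Longrightarrow> acod a = l \<Longrightarrow> wf_arrow n a \<Longrightarrow>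
          a' \<in> A' \<Longrightarrow> adom a' = l \<Longrightarrow> acod a' = m \<Longrightarrow> wf_arrow n a' \<Longrightarrow> acomp n a' a \<in> lspan n A'' k m"
  shows "acomp n g f \<in> lspan n A'' k m"
proof -
  have "acomp n g f \<in> lspan n A'' (adom f) m"
  proof (rule lspan_acomp_right[OF assms(2)])
    fix a' assume "a' \<in> A'" "adom a' = l" "acod a' = m" "wf_arrow n a'"
    thus "acomp n a' f \<in> lspan n A'' (adom f) m"
      using lspan_acomp_left[OF assms(1), of a' A''] assms(3) lspan_typed[OF assms(1)] by simp
  qed (use lspan_typed[OF assms(1)] in simp)
  thus ?thesis using lspan_typed[OF assms(1)] by simp
qed

lemma lspan_atens_lspan:
  assumes f: "f \<in> lspan n A k l" and g: "g \<in> lspan n A' k' l'"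
    and "\<And>a a'. a \<in> A \<Longrightarrow> adom a = k \<Longrightarrow> acod a = l \<Longrightarrow> wf_arrow n a \<Longrightarrow>
          a' \<in> A' \<Longrightarrow> adom a' = k' \<Longrightarrow> acod a' = l' \<Longrightarrow> wf_arrow n a' \<Longrightarrow>
          atens n a a' \<in> lspan n A'' (k + k') (l + l')"
  shows "atens n f g \<in> lspan n A'' (k + k') (l + l')"
proof (rule lspan_map[OF f, where \<phi> = "\<lambda>z. atens n z g"])
  fix a assume a: "a \<in> A" "adom a = k" "acod a = l" "wf_arrow n a"
  show "atens n a g \<in> lspan n A'' (k + k') (l + l')"
    by (rule lspan_map[OF g, where \<phi> = "\<lambda>z. atens n a z"])
       (use assms(3) a in \<open>auto simp: atens_azero_right atens_aadd_right atens_ascale_right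
          intro: lspan.zero\<close>)
qed (use lspan_typed[OF g] in \<open>auto simp: atens_azero_left atens_aadd_left atens_ascale_left
       intro: lspan.zero\<close>)

lemma lin_comb_ab_Nil: "lin_comb_ab n k l [] = azero n k l"
  by (simp add: lin_comb_ab_def)

lemma lin_comb_ab_Cons:
  "lin_comb_ab n k l ((c, a, b) # xs) = aadd n (ascale n c (acomp n a (astar n b))) (lin_comb_ab n k l xs)"
  by (simp add: lin_comb_ab_def)

lemma lin_comb_ab_typed:
  assumes "\<forall>(c, a, b) \<in> set xs. acod a = l \<and> acod b = k"
  shows "adom (lin_comb_ab n k l xs) = k \<and> acod (lin_comb_ab n k l xs) = l
    \<and> wf_arrow n (lin_comb_ab n k l xs)"
  using assms by (induct xs) (auto simp: lin_comb_ab_Nil lin_comb_ab_Cons)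

lemma lin_comb_ab_append:
  assumes "\<forall>(c, a, b) \<in> set xs. acod a = l \<and> acod b = k" "\<forall>(c, a, b) \<in> set ys. acod a = l \<and> acod b = k"
  shows "lin_comb_ab n k l (xs @ ys) = aadd n (lin_comb_ab n k l xs) (lin_comb_ab n k l ys)"
  using assms
proof (induct xs)
  case Nil
  thus ?case using lin_comb_ab_typed[OF Nil(2)] by (simp add: lin_comb_ab_Nil aadd_azero_left)
next
  case (Cons t xs)
  thus ?case using lin_comb_ab_typed[of xs l k n] lin_comb_ab_typed[of ys l k n]
    by (cases t) (simp add: lin_comb_ab_Cons aadd_assoc)
qed

lemma lin_comb_ab_scale:
  assumes "\<forall>(c, a, b) \<in> set xs. acod a = l \<and> acod b = k"
  shows "ascale n s (lin_comb_ab n k l xs) = lin_comb_ab n k l (map (\<lambda>(c, a, b). (s * c, a, b)) xs)"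
  using assms
proof (induct xs)
  case (Cons t xs)
  thus ?case using lin_comb_ab_typed[of xs l k n]
    by (cases t) (simp add: lin_comb_ab_Cons ascale_aadd ascale_ascale)
qed (simp add: lin_comb_ab_Nil ascale_azero)

definition adj_products :: "nat \<Rightarrow> arrow set \<Rightarrow> arrow set \<Rightarrow> arrow set" where
  "adj_products n X Y = {acomp n x (astar n y) | x y. x \<in> X \<and> y \<in> Y \<and> adom x = adom y}"

lemma adj_product_in_lspan:
  assumes "x \<in> X" "y \<in> Y" "adom x = adom y"
  shows "acomp n x (astar n y) \<in> lspan n (adj_products n X Y) (acod y) (acod x)"
proof (rule lspan.base)
  show "acomp n x (astar n y) \<in> adj_products n X Y"
    unfolding adj_products_def using assms by blast
qed simp_all

lemma lspan_adj_products_mono: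
  assumes "f \<in> lspan n (adj_products n X Y) k l" "X \<subseteq> X'" "Y \<subseteq> Y'"
  shows "f \<in> lspan n (adj_products n X' Y') k l"
proof (rule lspan_trans[OF assms(1)])
  fix a assume "a \<in> adj_products n X Y" "adom a = k" "acod a = l"
  then obtain x y where "a = acomp n x (astar n y)" "x \<in> X'" "y \<in> Y'" "adom x = adom y"
    "acod y = k" "acod x = l"
    unfolding adj_products_def using assms(2,3) by fastforce
  thus "a \<in> lspan n (adj_products n X' Y') k l"
    using adj_product_in_lspan by blast
qed

lemma lspan_adj_products_astar:
  assumes "f \<in> lspan n (adj_products n X Y) k l" "\<forall>y\<in>Y. wf_arrow n y"
  shows "astar n f \<in> lspan n (adj_products n Y X) l k"
proof (rule lspan_trans[OF lspan_astar[OF assms(1)]])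
  fix a assume "a \<in> astar n ` adj_products n X Y" "adom a = l" "acod a = k"
  then obtain x y where "a = astar n (acomp n x (astar n y))" "x \<in> X" "y \<in> Y" "adom x = adom y"
    "acod x = l" "acod y = k"
    unfolding adj_products_def by fastforce
  thus "a \<in> lspan n (adj_products n Y X) l k"
    using assms(2) adj_product_in_lspan[of y Y x X n] by (simp add: astar_acomp astar_astar)
qed

lemma lspan_adj_products_acomp_left:
  assumes "f \<in> lspan n (adj_products n X Y) k l" "adom L = l"
    and "\<And>x. x \<in> X \<Longrightarrow> acod x = l \<Longrightarrow> acomp n L x \<in> X'"
  shows "acomp n L f \<in> lspan n (adj_products n X' Y) k (acod L)"
proof (rule lspan_acomp_left[OF assms(1,2)])
  fix a assume "a \<in> adj_products n X Y" "adom a = k" "acod a = l"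
  then obtain x y where "a = acomp n x (astar n y)" "x \<in> X" "y \<in> Y" "adom x = adom y" "acod x = l" "acod y = k"
    unfolding adj_products_def by auto
  thus "acomp n L a \<in> lspan n (adj_products n X' Y) k (acod L)"
    using assms(2,3) adj_product_in_lspan[of "acomp n L x" X' y Y n] by (simp add: acomp_assoc)
qed

lemma lspan_lin_comb_ab:
  assumes "f \<in> lspan n (adj_products n X Y) k l"
  shows "\<exists>xs. (\<forall>(c, a, b) \<in> set xs. a \<in> X \<and> b \<in> Y \<and> adom a = adom b \<and> acod a = l \<and> acod b = k)
    \<and> f = lin_comb_ab n k l xs"
  using assms
proof induct
  case (base g)
  then obtain a b where g: "g = acomp n a (astar n b)" "a \<in> X" "b \<in> Y" "adom a = adom b"
    unfolding adj_products_def by blast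
  have "lin_comb_ab n k l [(1, a, b)] = g"
    using base g by (intro arrow_eqI[of n]) (auto simp: lin_comb_ab_Cons lin_comb_ab_Nil aker_ops)
  thus ?case using g base by (intro exI[of _ "[(1, a, b)]"]) auto
next
  case zero
  show ?case by (intro exI[of _ "[]"]) (simp add: lin_comb_ab_Nil)
next
  case (add f g)
  then obtain xs ys where
    xs: "\<forall>(c, a, b) \<in> set xs. a \<in> X \<and> b \<in> Y \<and> adom a = adom b \<and> acod a = l \<and> acod b = k"
      "f = lin_comb_ab n k l xs" and
    ys: "\<forall>(c, a, b) \<in> set ys. a \<in> X \<and> b \<in> Y \<and> adom a = adom b \<and> acod a = l \<and> acod b = k"
      "g = lin_comb_ab n k l ys"
    by blast
  have "aadd n f g = lin_comb_ab n k l (xs @ ys)"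
    using xs ys lin_comb_ab_append[of xs l k ys n] by fastforce
  thus ?case using xs ys by (intro exI[of _ "xs @ ys"]) auto
next
  case (scale f s)
  then obtain xs where
    xs: "\<forall>(c, a, b) \<in> set xs. a \<in> X \<and> b \<in> Y \<and> adom a = adom b \<and> acod a = l \<and> acod b = k"
      "f = lin_comb_ab n k l xs"
    by blast
  have "ascale n s f = lin_comb_ab n k l (map (\<lambda>(c, a, b). (s * c, a, b)) xs)"
    using xs lin_comb_ab_scale[of xs l k n s] by fastforce
  thus ?case using xs by (intro exI[of _ "map (\<lambda>(c, a, b). (s * c, a, b)) xs"]) auto
qed

section \<open>The algebra and its canonical trace\<close>

lemma cadj_mult: "cadj (A ** B) = cadj B ** cadj (A :: ('N::finite) cmat)"
  by (simp add: cadj_def matrix_matrix_mult_def vec_eq_iff mult.commute)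

lemma cadj_cadj [simp]: "cadj (cadj A) = A"
  by (simp add: cadj_def vec_eq_iff)

lemma cadj_mat_1 [simp]: "cadj (mat 1 :: ('N::finite) cmat) = mat 1"
  by (simp add: cadj_def mat_def vec_eq_iff)

lemma cadj_sum: "cadj (\<Sum>s\<in>S. f s) = (\<Sum>s\<in>S. cadj (f s :: ('N::finite) cmat))"
  by (simp add: cadj_def vec_eq_iff)

lemma cadj_cscale: "cadj (cscale c A) = cscale (cnj c) (cadj (A :: ('N::finite) cmat))"
  by (simp add: cadj_def cscale_def vec_eq_iff)

lemma matrix_add_rdistrib: "(A + B) ** C = A ** C + B ** (C :: ('N::finite) cmat)"
  by (simp add: matrix_matrix_mult_def vec_eq_iff distrib_right sum.distrib)

lemma matrix_sum_mult: "(\<Sum>s\<in>S. f s) ** B = (\<Sum>s\<in>S. f s ** B :: ('N::finite) cmat)"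
  by (simp add: matrix_matrix_mult_def vec_eq_iff sum_distrib_right, intro allI, rule sum.swap)

lemma matrix_mult_sum: "A ** (\<Sum>s\<in>S. f s) = (\<Sum>s\<in>S. A ** f s :: ('N::finite) cmat)"
  by (simp add: matrix_matrix_mult_def vec_eq_iff sum_distrib_left, intro allI, rule sum.swap)

lemma cscale_mult_left: "cscale c A ** B = cscale c (A ** B :: ('N::finite) cmat)"
  by (simp add: cscale_def matrix_matrix_mult_def vec_eq_iff sum_distrib_left mult.assoc)

lemma cscale_mult_right: "A ** cscale c B = cscale c (A ** B :: ('N::finite) cmat)"
  by (simp add: cscale_def matrix_matrix_mult_def vec_eq_iff sum_distrib_left mult_ac)

lemma cscale_add_left: "cscale (c + d) A = cscale c A + cscale d (A :: ('N::finite) cmat)"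
  by (simp add: cscale_def vec_eq_iff distrib_right)

lemma cscale_diff_left: "cscale (c - d) A = cscale c A - cscale d (A :: ('N::finite) cmat)"
  by (simp add: cscale_def vec_eq_iff left_diff_distrib)

lemma cscale_0_left [simp]: "cscale 0 A = (0 :: ('N::finite) cmat)"
  by (simp add: cscale_def vec_eq_iff)

lemma cscale_cscale: "cscale c (cscale d A) = cscale (c * d) (A :: ('N::finite) cmat)"
  by (simp add: cscale_def vec_eq_iff mult.assoc)

lemma cscale_sum: "cscale c (\<Sum>s\<in>S. f s) = (\<Sum>s\<in>S. cscale c (f s :: ('N::finite) cmat))"
  by (simp add: cscale_def vec_eq_iff sum_distrib_left)

lemma lincomb_add: "lincomb e (\<lambda>i. c i + d i) = lincomb e c + lincomb e d"
  by (simp add: lincomb_def cscale_add_left sum.distrib)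

lemma lincomb_diff: "lincomb e (\<lambda>i. c i - d i) = lincomb e c - lincomb e d"
  by (simp add: lincomb_def cscale_diff_left sum_subtractf)

lemma lincomb_cscale: "lincomb e (\<lambda>i. a * c i) = cscale a (lincomb e c)"
  by (simp add: lincomb_def cscale_sum cscale_cscale)

locale onb_algebra =
  fixes B :: "('N::finite) cmat set" and e :: "'N cmat list"
  assumes fd_cstar_alg: "fd_cstar_alg B" and onb: "onb B e" and e_nonempty: "e \<noteq> []"
begin

abbreviation "\<tau> \<equiv> can_trace e"
abbreviation "E i \<equiv> e ! i"

lemma B_zero: "0 \<in> B"
  and B_one: "mat 1 \<in> B"
  and B_add: "x \<in> B \<Longrightarrow> y \<in> B \<Longrightarrow> x + y \<in> B"
  and B_mult: "x \<in> B \<Longrightarrow> y \<in> B \<Longrightarrow> x ** y \<in> B"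
  and B_cscale: "x \<in> B \<Longrightarrow> cscale c x \<in> B"
  and B_cadj: "x \<in> B \<Longrightarrow> cadj x \<in> B"
  using fd_cstar_alg unfolding fd_cstar_alg_def by auto

lemma B_sum: "(\<And>s. s \<in> S \<Longrightarrow> f s \<in> B) \<Longrightarrow> (\<Sum>s\<in>S. f s) \<in> B"
  by (induct S rule: infinite_finite_induct) (simp_all add: B_zero B_add)

lemma is_basis: "is_basis B e"
  using onb unfolding onb_def by simp

lemma orthonormal:
  "i < length e \<Longrightarrow> j < length e \<Longrightarrow> \<tau> (cadj (E j) ** E i) = (if i = j then 1 else 0)"
  using onb unfolding onb_def by simp

lemma E_in_B: "i < length e \<Longrightarrow> E i \<in> B"
  using is_basis unfolding is_basis_def by auto

lemma cadj_E_in_B: "i < length e \<Longrightarrow> cadj (E i) \<in> B"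
  by (simp add: E_in_B B_cadj)

lemmas B_closed = B_one B_mult B_cadj E_in_B cadj_E_in_B

lemma lincomb_unique: "lincomb e c = lincomb e d \<Longrightarrow> i < length e \<Longrightarrow> c i = d i"
  using is_basis lincomb_diff[of e c d] unfolding is_basis_def by (metis right_minus_eq)

lemma coord: assumes "b \<in> B"
  shows "(\<forall>i. length e \<le> i \<longrightarrow> coord e b i = 0) \<and> lincomb e (coord e b) = b"
proof -
  obtain c where c: "lincomb e c = b" using is_basis assms unfolding is_basis_def by blast
  define c' where "c' i = (if i < length e then c i else 0)" for i
  have c': "lincomb e c' = b" using c unfolding lincomb_def c'_def by (auto intro!: sum.cong)
  have "\<exists>!d. (\<forall>i. length e \<le> i \<longrightarrow> d i = 0) \<and> lincomb e d = b"
  proof (rule ex1I[of _ c'])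
    fix d assume d: "(\<forall>i. length e \<le> i \<longrightarrow> d i = 0) \<and> lincomb e d = b"
    show "d = c'"
    proof
      fix i show "d i = c' i"
        using d c' lincomb_unique[of d c' i] by (cases "i < length e") (auto simp: c'_def)
    qed
  qed (use c' in \<open>simp add: c'_def\<close>)
  thus ?thesis unfolding coord_def by (rule theI')
qed

lemma coord_eqI: "lincomb e c = b \<Longrightarrow> b \<in> B \<Longrightarrow> i < length e \<Longrightarrow> coord e b i = c i"
  using coord[of b] lincomb_unique[of "coord e b" c i] by simp

lemma coord_add: "x \<in> B \<Longrightarrow> y \<in> B \<Longrightarrow> i < length e \<Longrightarrow> coord e (x + y) i = coord e x i + coord e y i"
  by (rule coord_eqI) (simp_all add: lincomb_add coord B_add)

lemma coord_cscale: "x \<in> B \<Longrightarrow> i < length e \<Longrightarrow> coord e (cscale a x) i = a * coord e x i"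
  by (rule coord_eqI) (simp_all add: lincomb_cscale coord B_cscale)

lemma coord_zero: "i < length e \<Longrightarrow> coord e 0 i = 0"
  by (rule coord_eqI) (simp_all add: lincomb_def B_zero)

lemma tau_add: "x \<in> B \<Longrightarrow> y \<in> B \<Longrightarrow> \<tau> (x + y) = \<tau> x + \<tau> y"
  unfolding can_trace_def
  by (simp add: matrix_add_rdistrib coord_add B_mult E_in_B sum.distrib add_divide_distrib)

lemma tau_cscale: "x \<in> B \<Longrightarrow> \<tau> (cscale a x) = a * \<tau> x"
  unfolding can_trace_def by (simp add: cscale_mult_left coord_cscale B_mult E_in_B sum_distrib_left)

lemma tau_sum_cscale:
  "(\<And>s. s \<in> S \<Longrightarrow> f s \<in> B) \<Longrightarrow> \<tau> (\<Sum>s\<in>S. cscale (c s) (f s)) = (\<Sum>s\<in>S. c s * \<tau> (f s))"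
proof (induct S rule: infinite_finite_induct)
  case (insert x F)
  thus ?case by (simp add: tau_add tau_cscale B_sum B_cscale)
qed (simp_all add: can_trace_def coord_zero)

lemma coord_eq_tau: assumes "b \<in> B" "i < length e" shows "coord e b i = \<tau> (cadj (E i) ** b)"
proof -
  define c where "c = coord e b"
  have "\<tau> (cadj (E i) ** b) = \<tau> (cadj (E i) ** (\<Sum>j<length e. cscale (c j) (E j)))"
    using coord[OF assms(1)] unfolding c_def lincomb_def by simp
  also have "\<dots> = \<tau> (\<Sum>j<length e. cscale (c j) (cadj (E i) ** E j))"
    by (simp add: matrix_mult_sum cscale_mult_right)
  also have "\<dots> = (\<Sum>j<length e. c j * \<tau> (cadj (E i) ** E j))"
    using assms by (intro tau_sum_cscale) (simp add: B_closed)
  also have "\<dots> = c i" using assms by (simp add: orthonormal if_distrib cong: if_cong)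
  finally show ?thesis by (simp add: c_def)
qed

lemma basis_expansion: "b \<in> B \<Longrightarrow> b = (\<Sum>i<length e. cscale (\<tau> (cadj (E i) ** b)) (E i))"
  using coord[of b] unfolding lincomb_def by (simp add: coord_eq_tau)

lemma tau_as_trace:
  "b \<in> B \<Longrightarrow> of_nat (length e) * \<tau> b = (\<Sum>i<length e. \<tau> (cadj (E i) ** (b ** E i)))"
  using e_nonempty by (simp add: can_trace_def coord_eq_tau B_mult E_in_B)

lemma tau_one: "\<tau> (mat 1) = 1"
  using tau_as_trace[OF B_one] e_nonempty by (simp add: orthonormal)

lemma tau_resolve_identity:
  assumes "L \<in> B" "Y \<in> B" "R \<in> B"
  shows "(\<Sum>z<length e. \<tau> (cadj (E z) ** Y) * \<tau> (L ** E z ** R)) = \<tau> (L ** Y ** R)"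
proof -
  have "\<tau> (L ** Y ** R) = \<tau> (\<Sum>z<length e. cscale (\<tau> (cadj (E z) ** Y)) (L ** E z ** R))"
    by (subst basis_expansion[OF assms(2)])
       (simp add: matrix_mult_sum matrix_sum_mult cscale_mult_right cscale_mult_left)
  also have "\<dots> = (\<Sum>z<length e. \<tau> (cadj (E z) ** Y) * \<tau> (L ** E z ** R))"
    using assms by (intro tau_sum_cscale) (simp add: B_closed)
  finally show ?thesis by simp
qed

lemma tau_resolve_identity':
  "L \<in> B \<Longrightarrow> Y \<in> B \<Longrightarrow> (\<Sum>z<length e. \<tau> (cadj (E z) ** Y) * \<tau> (L ** E z)) = \<tau> (L ** Y)"
  using tau_resolve_identity[OF _ _ B_one] by simp

text \<open>The canonical trace is tracial because it is the trace of left multiplication.\<close>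
lemma tau_commute: assumes "x \<in> B" "y \<in> B" shows "\<tau> (x ** y) = \<tau> (y ** x)"
proof -
  have trace_product: "of_nat (length e) * \<tau> (x ** y)
      = (\<Sum>i<length e. \<Sum>j<length e. \<tau> (cadj (E j) ** (y ** E i)) * \<tau> (cadj (E i) ** x ** E j))"
    if "x \<in> B" "y \<in> B" for x y
  proof -
    have "of_nat (length e) * \<tau> (x ** y) = (\<Sum>i<length e. \<tau> ((cadj (E i) ** x) ** (y ** E i)))"
      using that by (simp add: tau_as_trace B_mult matrix_mul_assoc)
    also have "\<dots> = (\<Sum>i<length e. \<Sum>j<length e. \<tau> (cadj (E j) ** (y ** E i)) * \<tau> (cadj (E i) ** x ** E j))"
      using that by (intro sum.cong refl tau_resolve_identity'[symmetric]) (simp_all add: B_closed)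
    finally show ?thesis .
  qed
  have "of_nat (length e) * \<tau> (x ** y) = of_nat (length e) * \<tau> (y ** x)"
    unfolding trace_product[OF assms] trace_product[OF assms(2,1)]
    by (subst sum.swap) (simp add: mult.commute matrix_mul_assoc)
  thus ?thesis using e_nonempty by simp
qed

lemma tau_cadj_mult: assumes "x \<in> B" "y \<in> B" shows "\<tau> (cadj y ** x) = cnj (\<tau> (cadj x ** y))"
proof -
  have expand: "\<tau> (cadj y ** x) = (\<Sum>j<length e. cnj (\<tau> (cadj (E j) ** y)) * \<tau> (cadj (E j) ** x))"
    if "x \<in> B" "y \<in> B" for x y
  proof -
    have "\<tau> (cadj y ** x) = \<tau> (\<Sum>j<length e. cscale (cnj (\<tau> (cadj (E j) ** y))) (cadj (E j) ** x))"
      by (subst basis_expansion[OF that(2)]) (simp add: cadj_sum cadj_cscale matrix_sum_mult cscale_mult_left)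
    also have "\<dots> = (\<Sum>j<length e. cnj (\<tau> (cadj (E j) ** y)) * \<tau> (cadj (E j) ** x))"
      using that by (intro tau_sum_cscale) (simp add: B_closed)
    finally show ?thesis .
  qed
  show ?thesis unfolding expand[OF assms] expand[OF assms(2,1)] by (simp add: mult.commute)
qed

lemma tau_cadj: "x \<in> B \<Longrightarrow> \<tau> (cadj x) = cnj (\<tau> x)"
  using tau_cadj_mult[OF B_one] by simp

end

section \<open>The Frobenius relations\<close>

lemma mult_if_0: "(x::complex) * (if P then y else 0) = (if P then x * y else 0)"
  and if_0_mult: "(if P then y else 0) * (x::complex) = (if P then y * x else 0)"
  by simp_all

lemma sum_if_0: "(\<Sum>x\<in>A. if P then f x else 0) = (if P then \<Sum>x\<in>A. f x else 0)"
  by simp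

context onb_algebra
begin

abbreviation "n \<equiv> length e"
abbreviation "\<eta> \<equiv> aeta e"
abbreviation "\<mu> \<equiv> amu e"
abbreviation "\<delta> \<equiv> astar n (amu e)"

lemma aeta_typed [simp]: "adom \<eta> = 0" "acod \<eta> = 1" "wf_arrow n \<eta>"
  by (simp_all add: aeta_def)

lemma amu_typed [simp]: "adom \<mu> = 2" "acod \<mu> = 1" "wf_arrow n \<mu>"
  by (simp_all add: amu_def)

lemma aker_aeta: "a < n \<Longrightarrow> aker \<eta> [a] [] = \<tau> (cadj (E a))"
  by (simp add: aeta_def)

lemma aker_amu: "a < n \<Longrightarrow> b < n \<Longrightarrow> c < n \<Longrightarrow> aker \<mu> [a] [b, c] = \<tau> (cadj (E a) ** E b ** E c)"
  by (simp add: amu_def numeral_2_eq_2 matrix_mul_assoc)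

lemma aker_amu_adj:
  "a < n \<Longrightarrow> b < n \<Longrightarrow> c < n \<Longrightarrow> aker \<delta> [b, c] [a] = \<tau> (cadj (E c) ** cadj (E b) ** E a)"
  by (simp add: aker_ops numeral_2_eq_2 aker_amu tau_cadj[symmetric] B_closed cadj_mult matrix_mul_assoc)

lemma aeta_adj_aeta: "acomp n (astar n \<eta>) \<eta> = aid n 0"
proof (rule arrow_eqI[of n])
  have "aker (acomp n (astar n \<eta>) \<eta>) [] [] = (\<Sum>a<n. cnj (\<tau> (cadj (E a))) * \<tau> (cadj (E a)))"
    by (simp add: aker_ops sum_words_Suc aker_aeta)
  also have "\<dots> = (\<Sum>a<n. \<tau> (cadj (E a) ** mat 1) * \<tau> (mat 1 ** E a))"
    by (simp add: tau_cadj[OF cadj_E_in_B, symmetric] mult.commute)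
  also have "\<dots> = 1"
    using tau_resolve_identity'[OF B_one B_one] tau_one by simp
  finally have "aker (acomp n (astar n \<eta>) \<eta>) [] [] = 1" .
  thus "aker (acomp n (astar n \<eta>) \<eta>) y x = aker (aid n 0) y x"
    if "y \<in> words n (acod (acomp n (astar n \<eta>) \<eta>))" "x \<in> words n (adom (acomp n (astar n \<eta>) \<eta>))"
    for y x
    using that by (simp add: aker_ops)
qed simp_all

lemma amu_amu_adj: "acomp n \<mu> \<delta> = ascale n (of_nat n) (aid n 1)"
proof (rule arrow_eqI[of n])
  fix y x assume "y \<in> words n (acod (acomp n \<mu> \<delta>))" "x \<in> words n (adom (acomp n \<mu> \<delta>))"
  then obtain p q where yx: "y = [p]" "x = [q]" and pq: "p < n" "q < n"
    by (auto elim!: words_SucE)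
  have "aker (acomp n \<mu> \<delta>) y x
     = (\<Sum>a<n. \<Sum>b<n. \<tau> (cadj (E b) ** (cadj (E a) ** E q)) * \<tau> ((cadj (E p) ** E a) ** E b))"
    using yx pq by (simp add: aker_ops(1) numeral_2_eq_2 sum_words_Suc aker_amu aker_amu_adj
        matrix_mul_assoc mult.commute)
  also have "\<dots> = (\<Sum>a<n. \<tau> ((cadj (E p) ** E a) ** (cadj (E a) ** E q)))"
    using pq by (intro sum.cong refl tau_resolve_identity') (simp_all add: B_closed)
  also have "\<dots> = (\<Sum>a<n. \<tau> (cadj (E a) ** ((E q ** cadj (E p)) ** E a)))"
    using pq tau_commute[of "cadj (E p) ** E a" "cadj (E a) ** E q" for a]
    by (intro sum.cong refl) (simp_all add: B_closed matrix_mul_assoc)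
  also have "\<dots> = of_nat n * \<tau> (E q ** cadj (E p))"
    using pq by (simp add: tau_as_trace B_closed)
  also have "\<dots> = of_nat n * \<tau> (cadj (E p) ** E q)"
    using pq by (simp add: tau_commute B_closed)
  also have "\<dots> = aker (ascale n (of_nat n) (aid n 1)) y x"
    using yx pq by (simp add: aker_ops orthonormal)
  finally show "aker (acomp n \<mu> \<delta>) y x = aker (ascale n (of_nat n) (aid n 1)) y x" .
qed simp_all

lemma amu_aeta_left: "acomp n \<mu> (atens n \<eta> (aid n 1)) = aid n 1"
proof (rule arrow_eqI[of n])
  fix y x assume "y \<in> words n (acod (acomp n \<mu> (atens n \<eta> (aid n 1))))"
    "x \<in> words n (adom (acomp n \<mu> (atens n \<eta> (aid n 1))))"
  then obtain p q where yx: "y = [p]" "x = [q]" and pq: "p < n" "q < n"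
    by (auto elim!: words_SucE)
  have "aker (acomp n \<mu> (atens n \<eta> (aid n 1))) y x
      = (\<Sum>a<n. \<tau> (cadj (E a) ** mat 1) * \<tau> (cadj (E p) ** E a ** E q))"
    using yx pq by (simp add: aker_ops numeral_2_eq_2 sum_words_Suc aker_amu aker_aeta)
      (simp add: mult_if_0 if_0_mult sum_if_0 mult.commute cong: if_cong)
  also have "\<dots> = \<tau> (cadj (E p) ** E q)"
    using pq tau_resolve_identity[of "cadj (E p)" "mat 1" "E q"] by (simp add: B_closed)
  finally show "aker (acomp n \<mu> (atens n \<eta> (aid n 1))) y x = aker (aid n 1) y x"
    using yx pq by (simp add: aker_ops orthonormal)
qed simp_all

lemma amu_aeta_right: "acomp n \<mu> (atens n (aid n 1) \<eta>) = aid n 1"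
proof (rule arrow_eqI[of n])
  fix y x assume "y \<in> words n (acod (acomp n \<mu> (atens n (aid n 1) \<eta>)))"
    "x \<in> words n (adom (acomp n \<mu> (atens n (aid n 1) \<eta>)))"
  then obtain p q where yx: "y = [p]" "x = [q]" and pq: "p < n" "q < n"
    by (auto elim!: words_SucE)
  have "aker (acomp n \<mu> (atens n (aid n 1) \<eta>)) y x
      = (\<Sum>b<n. \<tau> (cadj (E b) ** mat 1) * \<tau> (cadj (E p) ** E q ** E b))"
    using yx pq by (simp add: aker_ops numeral_2_eq_2 sum_words_Suc aker_amu aker_aeta)
      (simp add: mult_if_0 if_0_mult sum_if_0 mult.commute cong: if_cong)
  also have "\<dots> = \<tau> (cadj (E p) ** E q)"
    using pq tau_resolve_identity'[of "cadj (E p) ** E q" "mat 1"] by (simp add: B_closed)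
  finally show "aker (acomp n \<mu> (atens n (aid n 1) \<eta>)) y x = aker (aid n 1) y x"
    using yx pq by (simp add: aker_ops orthonormal)
qed simp_all

lemma frobenius: "acomp n (atens n \<mu> (aid n 1)) (atens n (aid n 1) \<delta>) = acomp n \<delta> \<mu>"
proof (rule arrow_eqI[of n])
  fix y x assume "y \<in> words n (acod (acomp n (atens n \<mu> (aid n 1)) (atens n (aid n 1) \<delta>)))"
    "x \<in> words n (adom (acomp n (atens n \<mu> (aid n 1)) (atens n (aid n 1) \<delta>)))"
  then obtain p0 p1 q0 q1 where yx: "y = [p0, p1]" "x = [q0, q1]"
    and pq: "p0 < n" "p1 < n" "q0 < n" "q1 < n"
    by (auto simp: numeral_2_eq_2 elim!: words_SucE)
  let ?t = "\<tau> ((cadj (E p1) ** cadj (E p0)) ** (E q0 ** E q1))"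
  have "aker (acomp n (atens n \<mu> (aid n 1)) (atens n (aid n 1) \<delta>)) y x
      = (\<Sum>b<n. \<tau> (cadj (E p0) ** E q0 ** E b) * \<tau> (cadj (E p1) ** (cadj (E b) ** E q1)))"
    using yx pq
    by (simp add: aker_ops(1,2,7) numeral_2_eq_2 numeral_3_eq_3 sum_words_Suc aker_amu aker_amu_adj)
       (simp add: mult_if_0 if_0_mult sum_if_0 mult.assoc matrix_mul_assoc cong: if_cong)
  also have "\<dots> = (\<Sum>b<n. \<tau> (cadj (E b) ** (E q1 ** cadj (E p1))) * \<tau> ((cadj (E p0) ** E q0) ** E b))"
    using pq tau_commute[of "cadj (E p1)" "cadj (E b) ** E q1" for b]
    by (intro sum.cong refl) (simp_all add: B_closed matrix_mul_assoc)
  also have "\<dots> = \<tau> ((cadj (E p0) ** E q0) ** (E q1 ** cadj (E p1)))"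
    using pq by (intro tau_resolve_identity') (simp_all add: B_closed)
  also have "\<dots> = ?t"
    using pq tau_commute[of "cadj (E p0) ** E q0 ** E q1" "cadj (E p1)"]
    by (simp add: B_closed matrix_mul_assoc)
  also have "?t = (\<Sum>c<n. \<tau> (cadj (E c) ** (E q0 ** E q1)) * \<tau> ((cadj (E p1) ** cadj (E p0)) ** E c))"
    using pq by (simp add: tau_resolve_identity' B_closed)
  also have "\<dots> = aker (acomp n \<delta> \<mu>) y x"
    using yx pq
    by (simp add: aker_ops(1) numeral_2_eq_2 sum_words_Suc aker_amu aker_amu_adj matrix_mul_assoc mult.commute)
  finally show "aker (acomp n (atens n \<mu> (aid n 1)) (atens n (aid n 1) \<delta>)) y x = aker (acomp n \<delta> \<mu>) y x" .
qed simp_all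

end

section \<open>Moving adjoints to the right\<close>

context onb_algebra
begin

definition elementary :: "arrow set" where
  "elementary = {whisker n p g q | p g q. g = \<eta> \<or> g = \<delta>}"

text \<open>The index of \<open>elem_word i\<close> only bounds the number of elementary factors.\<close>
inductive elem_word :: "nat \<Rightarrow> arrow \<Rightarrow> bool" where
  aid: "elem_word i (aid n m)"
| acomp: "elem_word i w \<Longrightarrow> Q \<in> elementary \<Longrightarrow> adom Q = acod w \<Longrightarrow> elem_word (Suc i) (acomp n Q w)"

abbreviation "adj_words i j \<equiv> adj_products n (Collect (elem_word i)) (Collect (elem_word j))"

lemma generator_wf: "g = \<eta> \<or> g = \<delta> \<Longrightarrow> wf_arrow n g"
  by auto

lemma whisker_elementary: "g = \<eta> \<or> g = \<delta> \<Longrightarrow> whisker n p g q \<in> elementary"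
  unfolding elementary_def by blast

lemma elem_word_wf: "elem_word i w \<Longrightarrow> wf_arrow n w"
  by (induct rule: elem_word.induct) auto

lemma elem_word_mono: "elem_word i w \<Longrightarrow> i \<le> j \<Longrightarrow> elem_word j w"
proof (induct arbitrary: j rule: elem_word.induct)
  case (acomp i w Q)
  then obtain j' where "j = Suc j'" "i \<le> j'" by (cases j) auto
  thus ?case using acomp by (auto intro: elem_word.acomp)
qed (rule elem_word.aid)

lemma elem_word_acomp:
  "elem_word i x \<Longrightarrow> elem_word j y \<Longrightarrow> adom x = acod y \<Longrightarrow> elem_word (i + j) (acomp n x y)"
proof (induct arbitrary: y rule: elem_word.induct)
  case (aid i m)
  thus ?case using elem_word_wf[of j y] by (auto simp: acomp_id_left intro: elem_word_mono)
next
  case (acomp i w Q)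
  thus ?case by (simp add: acomp_assoc[symmetric] elem_word.acomp)
qed

lemma elementary_elem_word: "Q \<in> elementary \<Longrightarrow> elem_word 1 Q"
  using elem_word.acomp[OF elem_word.aid, of Q "adom Q" 0]
  by (auto simp: elementary_def acomp_id_right)

lemma aid_in_lspan_adj_words: "aid n m \<in> lspan n (adj_words i j) m m"
  using adj_product_in_lspan[of "aid n m" "Collect (elem_word i)" "aid n m" "Collect (elem_word j)" n]
  by (simp add: elem_word.aid astar_aid acomp_id_left)

lemma adj_whisker_aeta_aeta: "acomp n (astar n (whisker n p \<eta> q)) (whisker n p \<eta> q) = aid n (p + q)"
  by (simp add: astar_whisker acomp_whisker aeta_adj_aeta whisker_aid)

lemma adj_whisker_aeta_delta: "acomp n (astar n (whisker n p \<eta> (Suc q))) (whisker n p \<delta> q) = aid n (p + 1 + q)"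
proof -
  have "acomp n (astar n (atens n \<eta> (aid n 1))) \<delta> = aid n 1"
    by (simp add: astar_acomp[symmetric] amu_aeta_left[simplified] astar_aid)
  thus ?thesis
    by (simp add: whisker_atens_aid_right[symmetric] astar_whisker acomp_whisker whisker_aid)
qed

lemma adj_whisker_delta_aeta:
  "acomp n (astar n (whisker n p \<delta> q)) (whisker n p \<eta> (Suc q)) = aid n (p + 1 + q)"
  "acomp n (astar n (whisker n p \<delta> q)) (whisker n (Suc p) \<eta> q) = aid n (p + 1 + q)"
  by (simp_all add: whisker_atens_aid_right[symmetric] whisker_atens_aid_left[symmetric] astar_whisker
      acomp_whisker astar_astar amu_aeta_left[simplified] amu_aeta_right[simplified] whisker_aid)

lemma adj_whisker_delta_delta:
  "acomp n (astar n (whisker n p \<delta> q)) (whisker n p \<delta> q) = ascale n (of_nat n) (aid n (p + 1 + q))"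
  by (simp add: astar_whisker acomp_whisker astar_astar amu_amu_adj whisker_ascale whisker_aid)

lemma adj_whisker_delta_delta_shifted:
  "acomp n (astar n (whisker n p \<delta> (Suc q))) (whisker n (Suc p) \<delta> q)
    = acomp n (whisker n p \<delta> q) (astar n (whisker n p \<delta> q))"
proof -
  have "acomp n (astar n (atens n \<delta> (aid n 1))) (atens n (aid n 1) \<delta>) = acomp n \<delta> \<mu>"
    by (simp add: astar_atens astar_astar astar_aid frobenius[simplified])
  thus ?thesis
    by (simp add: whisker_atens_aid_right[symmetric] whisker_atens_aid_left[symmetric] astar_whisker
        acomp_whisker astar_astar)
qed

lemma aeta_neq_delta: "\<eta> \<noteq> \<delta>"
proof
  assume "\<eta> = \<delta>"
  hence "adom \<eta> = adom \<delta>" by (rule arg_cong)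
  thus False by simp
qed

lemma adj_whisker_in_lspan:
  assumes g: "g = \<eta> \<or> g = \<delta>" and h: "h = \<eta> \<or> h = \<delta>"
    and cod: "p + acod g + q = p' + acod h + q'" and "p \<le> p'"
  shows "acomp n (astar n (whisker n p g q)) (whisker n p' h q')
    \<in> lspan n (adj_words 1 1) (p' + adom h + q') (p + adom g + q)"
proof (cases "p + acod g \<le> p'")
  case True
  define m where "m = p' - p - acod g"
  have p': "p' = p + acod g + m" and q: "q = m + acod h + q'"
    using True cod by (simp_all add: m_def)
  have "acomp n (astar n (whisker n p g q)) (whisker n p' h q')
      = acomp n (whisker n (p + adom g + m) h q') (astar n (whisker n p g (m + adom h + q')))"
    unfolding p' q by (rule adj_whisker_disjoint[OF generator_wf[OF g] generator_wf[OF h]])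
  also have "\<dots> \<in> lspan n (adj_words 1 1) (acod (whisker n p g (m + adom h + q')))
      (acod (whisker n (p + adom g + m) h q'))"
    by (rule adj_product_in_lspan)
       (use g h in \<open>auto intro!: elementary_elem_word[simplified] whisker_elementary\<close>)
  finally show ?thesis
    using g h unfolding p' q by (auto simp: add_ac)
next
  case False
  have "p' = p \<or> (g = \<delta> \<and> p' = Suc p)"
    using False g \<open>p \<le> p'\<close> by auto
  then consider "g = \<eta>" "h = \<eta>" "p' = p" "q' = q" | "g = \<eta>" "h = \<delta>" "p' = p" "q = Suc q'"
    | "g = \<delta>" "h = \<eta>" "p' = p" "q' = Suc q" | "g = \<delta>" "h = \<eta>" "p' = Suc p" "q' = q"
    | "g = \<delta>" "h = \<delta>" "p' = p" "q' = q" | "g = \<delta>" "h = \<delta>" "p' = Suc p" "q = Suc q'"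
    using g h cod aeta_neq_delta by (elim disjE; auto)
  thus ?thesis
  proof cases
    case 1
    thus ?thesis using adj_whisker_aeta_aeta[of p q] aid_in_lspan_adj_words by simp
  next
    case 2
    thus ?thesis using adj_whisker_aeta_delta[of p q'] aid_in_lspan_adj_words by simp
  next
    case 3
    thus ?thesis using adj_whisker_delta_aeta(1)[of p q] aid_in_lspan_adj_words by simp
  next
    case 4
    thus ?thesis using adj_whisker_delta_aeta(2)[of p q] aid_in_lspan_adj_words by simp
  next
    case 5
    thus ?thesis using adj_whisker_delta_delta[of p q] lspan.scale[OF aid_in_lspan_adj_words] by simp
  next
    case 6
    thus ?thesis
      using adj_whisker_delta_delta_shifted[of p q']
        adj_product_in_lspan[of "whisker n p \<delta> q'" "Collect (elem_word 1)" "whisker n p \<delta> q'"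
          "Collect (elem_word 1)" n]
      by (simp add: elementary_elem_word[simplified] whisker_elementary)
  qed
qed

lemma adj_elementary_in_lspan:
  assumes "Q \<in> elementary" "R \<in> elementary" "acod Q = acod R"
  shows "acomp n (astar n Q) R \<in> lspan n (adj_words 1 1) (adom R) (adom Q)"
proof -
  obtain p g q where Q: "Q = whisker n p g q" "g = \<eta> \<or> g = \<delta>"
    using assms(1) unfolding elementary_def by blast
  obtain p' h q' where R: "R = whisker n p' h q'" "h = \<eta> \<or> h = \<delta>"
    using assms(2) unfolding elementary_def by blast
  show ?thesis
  proof (cases "p \<le> p'")
    case True
    thus ?thesis using adj_whisker_in_lspan[OF Q(2) R(2)] assms(3) Q R by simp
  next
    case False
    hence "acomp n (astar n R) Q \<in> lspan n (adj_words 1 1) (adom Q) (adom R)"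
      using adj_whisker_in_lspan[OF R(2) Q(2)] assms(3) Q R by simp
    hence "astar n (acomp n (astar n R) Q) \<in> lspan n (adj_words 1 1) (adom R) (adom Q)"
      by (rule lspan_adj_products_astar) (auto intro: elem_word_wf)
    thus ?thesis using assms(3) Q R by (simp add: astar_acomp astar_astar)
  qed
qed

lemma adj_word_in_lspan:
  "elem_word a u \<Longrightarrow> elem_word j v \<Longrightarrow> acod u = acod v \<Longrightarrow>
    acomp n (astar n u) v \<in> lspan n (adj_words j a) (adom v) (adom u)"
proof (induction "a + j" arbitrary: a j u v rule: less_induct)
  case less
  note IH = less.hyps
  from less.prems(1) show ?case
  proof cases
    case (aid m)
    have "acomp n (astar n u) v = acomp n v (astar n (aid n (adom v)))"
      using aid less.prems elem_word_wf[OF less.prems(2)]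
      by (simp add: astar_aid acomp_id_left acomp_id_right)
    also have "\<dots> \<in> lspan n (adj_words j a) (adom v) (adom u)"
      using adj_product_in_lspan[of v _ "aid n (adom v)"] aid less.prems by (simp add: elem_word.aid)
    finally show ?thesis .
  next
    case (acomp a' u' Q)
    note u = this
    from less.prems(2) show ?thesis
    proof cases
      case (aid m)
      have "acomp n (astar n u) v = acomp n (aid n (adom u)) (astar n u)"
        using aid less.prems elem_word_wf[OF less.prems(1)] by (simp add: acomp_id_left acomp_id_right)
      also have "\<dots> \<in> lspan n (adj_words j a) (adom v) (adom u)"
        using adj_product_in_lspan[of "aid n (adom u)" _ u] aid less.prems by (simp add: elem_word.aid)
      finally show ?thesis .
    next
      case (acomp j' v' R)
      note v = this
      have "acod Q = acod R"
        using u v less.prems(3) by simp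
      with \<open>Q \<in> elementary\<close> \<open>R \<in> elementary\<close>
      have QR: "acomp n (astar n Q) R \<in> lspan n (adj_words 1 1) (adom R) (adom Q)"
        by (rule adj_elementary_in_lspan)
      text \<open>For a summand \<open>x y*\<close> of \<open>Q* R\<close>, write \<open>u'* x\<close> by induction as a sum of
        terms \<open>r s*\<close>; then \<open>r s* y* v' = r (y s)* v'\<close>, and induction applies to \<open>(y s)* v'\<close>.\<close>
      have "acomp n (acomp n (astar n u') (acomp n (astar n Q) R)) v'
          \<in> lspan n (adj_words j a) (adom v') (acod (astar n u'))"
      proof (rule lspan_acomp[OF QR])
        fix z assume "z \<in> adj_words 1 1" "adom z = adom R" "acod z = adom Q"
        then obtain x y where z: "z = acomp n x (astar n y)" "elem_word 1 x" "elem_word 1 y"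
          "adom x = adom y" "acod x = adom Q" "acod y = adom R"
          unfolding adj_products_def by fastforce
        have u'x: "acomp n (astar n u') x \<in> lspan n (adj_words 1 a') (adom x) (adom u')"
          using IH[of a' 1 u' x] u v z by simp
        have "acomp n (acomp n (astar n u') x) (acomp n (astar n y) v')
            \<in> lspan n (adj_words j a) (adom (acomp n (astar n y) v')) (adom u')"
        proof (rule lspan_acomp_right[OF u'x])
          fix w assume "w \<in> adj_words 1 a'" "adom w = adom x" "acod w = adom u'"
          then obtain r s where w: "w = acomp n r (astar n s)" "elem_word 1 r" "elem_word a' s"
            "adom r = adom s" "acod r = adom u'" "acod s = adom x"
            unfolding adj_products_def by fastforce
          have ys: "elem_word a (acomp n y s)"
            using elem_word_acomp[OF z(3) w(3)] w z u by simp
          have "acomp n (astar n (acomp n y s)) v' \<in> lspan n (adj_words j' a) (adom v') (adom s)"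
            using IH[of a j' "acomp n y s" v'] ys u v z by simp
          hence "acomp n r (acomp n (astar n (acomp n y s)) v')
              \<in> lspan n (adj_words j a) (adom v') (acod r)"
            by (rule lspan_adj_products_acomp_left) (use w v elem_word_acomp[OF w(2)] in auto)
          moreover have "acomp n w (acomp n (astar n y) v')
              = acomp n r (acomp n (astar n (acomp n y s)) v')"
            using w z v by (simp add: acomp_assoc astar_acomp)
          ultimately show "acomp n w (acomp n (astar n y) v')
              \<in> lspan n (adj_words j a) (adom (acomp n (astar n y) v')) (adom u')"
            using w by simp
        qed (use z v in simp)
        moreover have "acomp n (acomp n (astar n u') z) v'
            = acomp n (acomp n (astar n u') x) (acomp n (astar n y) v')"
          using z v u by (simp add: acomp_assoc)
        ultimately show "acomp n (acomp n (astar n u') z) v'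
            \<in> lspan n (adj_words j a) (adom v') (acod (astar n u'))"
          by simp
      qed (use u v in simp_all)
      moreover have "acomp n (astar n u) v = acomp n (acomp n (astar n u') (acomp n (astar n Q) R)) v'"
        using u v \<open>acod Q = acod R\<close> by (simp add: astar_acomp acomp_assoc)
      ultimately show ?thesis using u v by simp
    qed
  qed
qed

section \<open>Arrows of \<open>C_B\<close> as combinations of products \<open>a b*\<close>\<close>

abbreviation "all_words \<equiv> {w. \<exists>i. elem_word i w}"

lemma elementary_atens_aid:
  assumes "Q \<in> elementary"
  shows "atens n Q (aid n r) \<in> elementary" "atens n (aid n r) Q \<in> elementary"
proof -
  obtain p g q where "Q = whisker n p g q" "g = \<eta> \<or> g = \<delta>"
    using assms unfolding elementary_def by blast
  thus "atens n Q (aid n r) \<in> elementary" "atens n (aid n r) Q \<in> elementary"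
    by (simp_all add: atens_whisker_aid atens_aid_whisker whisker_elementary)
qed

lemma elem_word_atens_aid:
  "elem_word i x \<Longrightarrow> elem_word i (atens n x (aid n r))"
  "elem_word i x \<Longrightarrow> elem_word i (atens n (aid n r) x)"
proof (induct rule: elem_word.induct)
  case (acomp i w Q)
  { case 1
    have "atens n (acomp n Q w) (aid n r) = acomp n (atens n Q (aid n r)) (atens n w (aid n r))"
      using acomp by (simp add: interchange acomp_id_left)
    thus ?case using acomp by (auto intro!: elem_word.acomp elementary_atens_aid) }
  { case 2
    have "atens n (aid n r) (acomp n Q w) = acomp n (atens n (aid n r) Q) (atens n (aid n r) w)"
      using acomp by (simp add: interchange acomp_id_left)
    thus ?case using acomp by (auto intro!: elem_word.acomp elementary_atens_aid) }
qed (simp_all add: atens_aid elem_word.aid)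

lemma elem_word_atens: "elem_word i x \<Longrightarrow> elem_word j y \<Longrightarrow> elem_word (i + j) (atens n x y)"
proof -
  assume x: "elem_word i x" and y: "elem_word j y"
  have "atens n x y = acomp n (atens n x (aid n (acod y))) (atens n (aid n (adom x)) y)"
    using elem_word_wf[OF x] elem_word_wf[OF y] by (simp add: interchange acomp_id_left acomp_id_right)
  thus ?thesis
    using elem_word_acomp[OF elem_word_atens_aid(1)[OF x] elem_word_atens_aid(2)[OF y]] by simp
qed

lemma generator_elem_word: "g = \<eta> \<or> g = \<delta> \<Longrightarrow> elem_word 1 g"
  using elementary_elem_word[OF whisker_elementary, of g 0 0] by (auto simp: whisker_0_0)

lemma CBplus_in_lspan_words: "f \<in> CBplus e \<Longrightarrow> f \<in> lspan n all_words (adom f) (acod f)"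
proof (induct rule: CBplus.induct)
  case (comp f g)
  have "acomp n g f \<in> lspan n all_words (adom f) (acod g)"
  proof (rule lspan_acomp_lspan[OF comp(2)])
    show "g \<in> lspan n all_words (acod f) (acod g)" using comp by simp
  next
    fix x y assume "x \<in> all_words" "adom x = adom f" "acod x = acod f"
      and "y \<in> all_words" "adom y = acod f" "acod y = acod g"
    then obtain i j where "elem_word (j + i) (acomp n y x)"
      using elem_word_acomp by fastforce
    thus "acomp n y x \<in> lspan n all_words (adom f) (acod g)"
      using \<open>adom x = adom f\<close> \<open>acod y = acod g\<close> by (auto intro: lspan.base)
  qed
  thus ?case by simp
next
  case (tens f g)
  have "atens n f g \<in> lspan n all_words (adom f + adom g) (acod f + acod g)"
  proof (rule lspan_atens_lspan[OF tens(2,4)])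
    fix x y assume "x \<in> all_words" "adom x = adom f" "acod x = acod f"
      and "y \<in> all_words" "adom y = adom g" "acod y = acod g"
    then obtain i j where "elem_word (i + j) (atens n x y)"
      using elem_word_atens by blast
    thus "atens n x y \<in> lspan n all_words (adom f + adom g) (acod f + acod g)"
      using \<open>adom x = adom f\<close> \<open>acod x = acod f\<close> \<open>adom y = adom g\<close> \<open>acod y = acod g\<close>
      by (auto intro: lspan.base)
  qed
  thus ?case by simp
qed (auto intro!: lspan.intros generator_elem_word elem_word.aid)

lemma aid_CBplus: "aid n m \<in> CBplus e"
proof (induct m)
  case (Suc m)
  thus ?case using CBplus.tens[OF CBplus.id1 Suc] by (simp add: atens_aid)
qed (rule CBplus.id0)

lemma elem_word_CBplus: "elem_word i w \<Longrightarrow> w \<in> CBplus e"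
proof (induct rule: elem_word.induct)
  case (acomp i w Q)
  moreover have "Q \<in> CBplus e"
    using \<open>Q \<in> elementary\<close> unfolding elementary_def whisker_def
    by (auto intro!: CBplus.tens CBplus.eta CBplus.mu_star aid_CBplus)
  ultimately show ?case by (auto intro: CBplus.comp)
qed (rule aid_CBplus)

lemma adj_comp_CBplus_in_lspan:
  assumes b: "b \<in> CBplus e" and c: "c \<in> CBplus e" and "acod b = acod c"
  shows "acomp n (astar n b) c \<in> lspan n (adj_products n all_words all_words) (adom c) (adom b)"
proof (rule lspan_acomp_lspan[OF CBplus_in_lspan_words[OF c]])
  show "astar n b \<in> lspan n (astar n ` all_words) (acod c) (adom b)"
    using lspan_astar[OF CBplus_in_lspan_words[OF b]] \<open>acod b = acod c\<close> by simp
next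
  fix w v assume "w \<in> all_words" "adom w = adom c" "acod w = acod c"
    and "v \<in> astar n ` all_words" "adom v = acod c" "acod v = adom b"
  then obtain i j u where "v = astar n u" "elem_word i u" "elem_word j w" "acod u = acod w"
    by auto
  thus "acomp n v w \<in> lspan n (adj_products n all_words all_words) (adom c) (adom b)"
    using adj_word_in_lspan[of i u j w] \<open>adom w = adom c\<close> \<open>acod v = adom b\<close>
    by (auto elim!: lspan_adj_products_mono)
qed

abbreviation "adj_CBplus \<equiv> adj_products n (CBplus e) (CBplus e)"

lemma CB_in_lspan_adj_CBplus:
  "f \<in> CB e \<Longrightarrow> f \<in> lspan n adj_CBplus (adom f) (acod f)"
proof (induct rule: CB.induct)
  case eta
  show ?case
    using adj_product_in_lspan[OF CBplus.eta[of e] CBplus.id0[of e], of n]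
    by (simp add: astar_aid acomp_id_right)
next
  case mu
  show ?case
    using adj_product_in_lspan[OF aid_CBplus[of 1] CBplus.mu_star[of e], of n]
    by (simp add: astar_astar acomp_id_left)
next
  case eta_star
  show ?case
    using adj_product_in_lspan[OF CBplus.id0[of e] CBplus.eta[of e], of n]
    by (simp add: acomp_id_left)
next
  case mu_star
  show ?case
    using adj_product_in_lspan[OF CBplus.mu_star[of e] aid_CBplus[of 1], of n]
    by (simp add: astar_aid acomp_id_right)
next
  case (ident m)
  show ?case
    using adj_product_in_lspan[OF aid_CBplus[of m] aid_CBplus[of m], of n]
    by (simp add: astar_aid acomp_id_right)
next
  case (comp f g)
  have "acomp n g f \<in> lspan n adj_CBplus (adom f) (acod g)"
  proof (rule lspan_acomp_lspan[OF comp(2)])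
    show "g \<in> lspan n adj_CBplus (acod f) (acod g)"
      using comp by simp
  next
    fix z z' assume "z \<in> adj_CBplus" "adom z = adom f" "acod z = acod f"
      and "z' \<in> adj_CBplus" "adom z' = acod f" "acod z' = acod g"
    then obtain a b c d where z: "z = acomp n a (astar n b)" "a \<in> CBplus e" "b \<in> CBplus e"
      "adom a = adom b" "acod a = acod f" "acod b = adom f"
      and z': "z' = acomp n c (astar n d)" "c \<in> CBplus e" "d \<in> CBplus e"
      "adom c = adom d" "acod c = acod g" "acod d = acod f"
      unfolding adj_products_def by fastforce
    text \<open>\<open>(c d*) (a b*) = c (d* a) b*\<close>, and \<open>d* a\<close> is a combination of products of words.\<close>
    have "acomp n (acomp n c (acomp n (astar n d) a)) (astar n b)
        \<in> lspan n adj_CBplus (adom (astar n b)) (acod c)"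
    proof (rule lspan_acomp[OF adj_comp_CBplus_in_lspan[OF z'(3) z(2)]])
      fix w assume "w \<in> adj_products n all_words all_words" "adom w = adom a" "acod w = adom d"
      then obtain x y i j where w: "w = acomp n x (astar n y)" "elem_word i x" "elem_word j y"
        "adom x = adom y" "acod x = adom d" "acod y = adom a"
        unfolding adj_products_def by fastforce
      have "acomp n (acomp n c w) (astar n b) = acomp n (acomp n c x) (astar n (acomp n b y))"
        using w z z' by (simp add: acomp_assoc astar_acomp)
      moreover have "acomp n c x \<in> CBplus e" "acomp n b y \<in> CBplus e"
        using CBplus.comp[OF elem_word_CBplus[OF w(2)] z'(2)]
          CBplus.comp[OF elem_word_CBplus[OF w(3)] z(3)] w z z' by simp_all
      ultimately show "acomp n (acomp n c w) (astar n b)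
          \<in> lspan n adj_CBplus (adom (astar n b)) (acod c)"
        using adj_product_in_lspan[of "acomp n c x" _ "acomp n b y"] w z by simp
    qed (use z z' in simp_all)
    moreover have "acomp n z' z = acomp n (acomp n c (acomp n (astar n d) a)) (astar n b)"
      using z z' by (simp add: acomp_assoc)
    ultimately show "acomp n z' z \<in> lspan n adj_CBplus (adom f) (acod g)"
      using z z' by simp
  qed
  thus ?case by simp
next
  case (tens f g)
  have "atens n f g \<in> lspan n adj_CBplus (adom f + adom g) (acod f + acod g)"
  proof (rule lspan_atens_lspan[OF tens(2,4)])
    fix z z' assume "z \<in> adj_CBplus" "adom z = adom f" "acod z = acod f"
      and "z' \<in> adj_CBplus" "adom z' = adom g" "acod z' = acod g"
    then obtain a b c d where z: "z = acomp n a (astar n b)" "a \<in> CBplus e" "b \<in> CBplus e"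
      "adom a = adom b" "acod a = acod f" "acod b = adom f"
      and z': "z' = acomp n c (astar n d)" "c \<in> CBplus e" "d \<in> CBplus e"
      "adom c = adom d" "acod c = acod g" "acod d = adom g"
      unfolding adj_products_def by fastforce
    have "atens n z z' = acomp n (atens n a c) (astar n (atens n b d))"
      using z z' by (simp add: interchange astar_atens)
    thus "atens n z z' \<in> lspan n adj_CBplus (adom f + adom g) (acod f + acod g)"
      using adj_product_in_lspan[OF CBplus.tens[OF z(2) z'(2)] CBplus.tens[OF z(3) z'(3)]] z z'
      by simp
  qed
  thus ?case by simp
qed (auto intro: lspan.intros)

end

theorem lemma3p1:
  fixes B :: "('N::finite) cmat set" and e :: "'N cmat list"
  assumes "fd_cstar_alg B"
    and "onb B e"
    and "length e \<ge> 4"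
  shows "\<forall>f \<in> CB e. \<exists>xs.
           (\<forall>(c, a, b) \<in> set xs. a \<in> CBplus e \<and> b \<in> CBplus e \<and> adom a = adom b
               \<and> acod a = acod f \<and> acod b = adom f)
           \<and> f = lin_comb_ab (length e) (adom f) (acod f) xs"
proof
  fix f assume "f \<in> CB e"
  interpret onb_algebra B e
    using assms by unfold_locales auto
  show "\<exists>xs. (\<forall>(c, a, b) \<in> set xs. a \<in> CBplus e \<and> b \<in> CBplus e \<and> adom a = adom b
               \<and> acod a = acod f \<and> acod b = adom f)
           \<and> f = lin_comb_ab (length e) (adom f) (acod f) xs"
    by (rule lspan_lin_comb_ab[OF CB_in_lspan_adj_CBplus[OF \<open>f \<in> CB e\<close>]])
qed

end
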